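(* Let $\mathbf{p}_t(\mathrm{mod}\,2)$ denote the polynomial $\mathbf{p}_t$ with coefficients reduced modulo $2$ (an element of $(\mathbf{Z}/2)[t]$). Then $\mathbf{p}_t(\mathrm{mod}\,2)$ is a homotopy invariant of virtual knots: if two virtual knots are homotopic, they have the same value of $\mathbf{p}_t(\mathrm{mod}\,2)$.
   Context: A virtual knot diagram is an oriented closed curve immersed in the plane with finitely many transverse double points, each either a classical crossing (with over/under information) or a virtual crossing (encircled, carrying no over/under information). Virtual knots are equivalence classes of such diagrams under the classical Reidemeister moves and the virtual Reidemeister moves (V1, V2, V3 involving only virtual crossings, and the mixed move in which a strand containing only virtual crossings passes across a classical crossing). Two virtual knot diagrams are homotopic if they are related by these moves together with crossing changes (switching the over- and under-strand at a classical crossing). The sign $\operatorname{sign}(d)\in\{\pm1\}$ of a classical crossing $d$ is $+1$ if (direction of over-strand, direction of under-strand) is a positively oriented basis of the plane, $-1$ otherwise. Smoothing at a classical crossing $d$ (replacing it by two non-crossing arcs respecting orientation) yields a two-component virtual link; ordering its components $(1,2)$, set $i(d)=\sum_{x}\operatorname{sgn}(x)$ over classical crossings $x$ between the two components, with $\operatorname{sgn}(x)=+1$ if (tangent of component 1, tangent of component 2) at $x$ is positively oriented and $-1$ otherwise. Then $\mathbf{p}_t(K)=\sum_d\operatorname{sign}(d)(t^{|i(d)|}-1)\in\mathbf{Z}[t]$, the sum over all classical crossings $d$ of a diagram of $K$; this is an invariant of virtual knots. *)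

theory Defs
  imports "HOL-Library.Z2" "HOL-Computational_Algebra.Polynomial"
begin

text \<open>Virtual knots are modelled combinatorially by (signed) Gauss diagrams,
written as Gauss words. A letter (c, ov, pos) records a passage through the
classical crossing labelled c; ov = True iff the passage is along the
over-strand; pos = True iff the crossing has sign +1. The word is read
cyclically along the orientation of the knot. Virtual crossings do not
appear in a Gauss diagram (the virtual and mixed moves act trivially on it).\<close>

type_synonym letter = "nat \<times> bool \<times> bool"
type_synonym gword = "letter list"

definition labels :: "gword \<Rightarrow> nat set" where
  "labels w = fst ` set w"

definition wf_gauss :: "gword \<Rightarrow> bool" where
  "wf_gauss w \<longleftrightarrow> (\<forall>c \<in> labels w. \<exists>s. count_list w (c, True, s) = 1
        \<and> count_list w (c, False, s) = 1
        \<and> length (filter (\<lambda>l. fst l = c) w) = 2)"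

text \<open>Oriented Reidemeister III configurations: three strands T (top), M (middle),
B (bottom), realised by three oriented lines; crossings a = T\<inter>M, b = T\<inter>B,
c = M\<inter>B. om encodes the orientation of the triangle (a,b,c); tT tM tB encode
whether each line runs counterclockwise along its edge of the triangle.
Result: the pairs of consecutive letters along T, along M and along B.\<close>

definition r3_pairs :: "bool \<Rightarrow> bool \<Rightarrow> bool \<Rightarrow> bool \<Rightarrow> nat \<Rightarrow> nat \<Rightarrow> nat
    \<Rightarrow> gword \<times> gword \<times> gword" where
  "r3_pairs om tT tM tB a b c =
     (let sa = (if om then tT \<noteq> tM else tT = tM);
          sb = (if om then tT = tB else tT \<noteq> tB);
          sc = (if om then tM \<noteq> tB else tM = tB);
          aT = (a, True, sa); bT = (b, True, sb);
          aM = (a, False, sa); cM = (c, True, sc);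
          bB = (b, False, sb); cB = (c, False, sc)
      in if om then
           ((if tT then [aT, bT] else [bT, aT]),
            (if tM then [cM, aM] else [aM, cM]),
            (if tB then [bB, cB] else [cB, bB]))
         else
           ((if tT then [bT, aT] else [aT, bT]),
            (if tM then [aM, cM] else [cM, aM]),
            (if tB then [cB, bB] else [bB, cB])))"

definition rot_move :: "gword \<Rightarrow> gword \<Rightarrow> bool" where
  "rot_move w w' \<longleftrightarrow> w' = rotate1 w"

definition rename_move :: "gword \<Rightarrow> gword \<Rightarrow> bool" where
  "rename_move w w' \<longleftrightarrow> (\<exists>f. inj_on f (labels w) \<and>
       w' = map (\<lambda>(c, ov, s). (f c, ov, s)) w)"

definition R1_move :: "gword \<Rightarrow> gword \<Rightarrow> bool" where
  "R1_move w w' \<longleftrightarrow> (\<exists>u v c ov s. w = u @ v \<and> c \<notin> labels w \<and>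
       w' = u @ [(c, ov, s), (c, \<not> ov, s)] @ v)"

definition R2_move :: "gword \<Rightarrow> gword \<Rightarrow> bool" where
  "R2_move w w' \<longleftrightarrow> (\<exists>u v x c d s. w = u @ v @ x \<and> c \<noteq> d \<and>
       c \<notin> labels w \<and> d \<notin> labels w \<and>
       (w' = u @ [(c, True, s), (d, True, \<not> s)] @ v @ [(c, False, s), (d, False, \<not> s)] @ x \<or>
        w' = u @ [(c, True, s), (d, True, \<not> s)] @ v @ [(d, False, \<not> s), (c, False, s)] @ x))"

definition R3_move :: "gword \<Rightarrow> gword \<Rightarrow> bool" where
  "R3_move w w' \<longleftrightarrow> (\<exists>u v y z X Y Z om tT tM tB a b c PT PM PB.
       a \<noteq> b \<and> a \<noteq> c \<and> b \<noteq> c \<and>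
       r3_pairs om tT tM tB a b c = (PT, PM, PB) \<and>
       mset [X, Y, Z] = mset [PT, PM, PB] \<and>
       w = u @ X @ v @ Y @ y @ Z @ z \<and>
       w' = u @ rev X @ v @ rev Y @ y @ rev Z @ z)"

definition cc_move :: "gword \<Rightarrow> gword \<Rightarrow> bool" where
  "cc_move w w' \<longleftrightarrow> (\<exists>c \<in> labels w.
       w' = map (\<lambda>(d, ov, s). if d = c then (d, \<not> ov, \<not> s) else (d, ov, s)) w)"

definition homotopy_step :: "gword \<Rightarrow> gword \<Rightarrow> bool" where
  "homotopy_step w w' \<longleftrightarrow> wf_gauss w \<and> wf_gauss w' \<and>
     (rot_move w w' \<or> rename_move w w' \<or> R1_move w w' \<or> R2_move w w' \<or>
      R3_move w w' \<or> cc_move w w')"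

definition homotopic :: "gword \<Rightarrow> gword \<Rightarrow> bool" where
  "homotopic = equivclp homotopy_step"

text \<open>Smoothing at crossing d: one component is the part of the curve strictly
between the two passages through d. i(d) = sum over crossings x between the two
components of sgn(x) (component 1 = this arc): +sign(x) if the arc passes over
at x, -sign(x) if it passes under.\<close>

definition arc :: "gword \<Rightarrow> nat \<Rightarrow> gword" where
  "arc w d = takeWhile (\<lambda>l. fst l \<noteq> d) (tl (dropWhile (\<lambda>l. fst l \<noteq> d) w))"

definition sgnval :: "bool \<Rightarrow> int" where
  "sgnval b = (if b then 1 else -1)"

definition crossing_index :: "gword \<Rightarrow> nat \<Rightarrow> int" where
  "crossing_index w d =
     (let A = arc w d in
      sum_list (map (\<lambda>(x, ov, s). sgnval s * sgnval ov)
        (filter (\<lambda>l. length (filter (\<lambda>m. fst m = fst l) A) = 1) A)))"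

text \<open>p_t(K) = sum over crossings d of sign(d) (t^|i(d)| - 1); each crossing is
counted once via its over-passage.\<close>
definition p_t :: "gword \<Rightarrow> int poly" where
  "p_t w = sum_list (map (\<lambda>(d, ov, s).
       smult (sgnval s) (monom 1 (nat \<bar>crossing_index w d\<bar>) - 1))
     (filter (\<lambda>l. fst (snd l)) w))"

definition p_t_mod2 :: "gword \<Rightarrow> bit poly" where
  "p_t_mod2 w = map_poly of_int (p_t w)"

end

theory Submission
  imports Defs
begin

text \<open>Reduced modulo 2 every sign becomes 1, so p_t(mod 2) is the sum over the crossings d of
t^|i(d)| + 1. Give an over (under) passage the weight +sign (-sign) of its crossing. In a
well-formed Gauss word both passages through a crossing carry the same sign, so a crossing met
twice by the arc of d contributes nothing and i(d) is simply the total weight of that arc.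
Each move preserves the sum: a crossing change flips over/under and sign together, so no weight
changes; R1 creates a crossing with empty arc, whose term t^0 + 1 vanishes mod 2; R2 inserts
zero-weight pieces into the other arcs and creates two crossings of equal index, whose terms
cancel mod 2; R3 preserves every index (a finite check over all oriented configurations); and
moving the base point across a passage of d replaces the arc of d by its complement, whose weight
is the negative one because a whole Gauss word has weight 0.\<close>

definition letter_weight :: "letter \<Rightarrow> int" where
  "letter_weight = (\<lambda>(c, ov, s). sgnval s * sgnval ov)"

definition word_weight :: "gword \<Rightarrow> int" where
  "word_weight w = sum_list (map letter_weight w)"

lemma sgnval_simps [simp]: "sgnval True = 1" "sgnval False = -1"
  by (simp_all add: sgnval_def)

lemma letter_weight_simp [simp]: "letter_weight (c, ov, s) = sgnval s * sgnval ov"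
  by (simp add: letter_weight_def)

lemma labels_simps [simp]:
  "labels [] = {}"
  "labels (l # w) = insert (fst l) (labels w)"
  "labels (u @ w) = labels u \<union> labels w"
  "labels (rev w) = labels w"
  by (auto simp: labels_def)

lemma finite_labels [simp]: "finite (labels w)"
  by (simp add: labels_def)

lemma word_weight_simps [simp]:
  "word_weight [] = 0"
  "word_weight (l # w) = letter_weight l + word_weight w"
  "word_weight (u @ w) = word_weight u + word_weight w"
  by (simp_all add: word_weight_def)

lemma word_weight_rev [simp]: "word_weight (rev w) = word_weight w"
  by (induction w) auto

lemma word_weight_mset: "mset u = mset w \<Longrightarrow> word_weight u = word_weight w"
  unfolding word_weight_def by (metis mset_map sum_mset_sum_list)

lemma word_weight_map:
  "(\<And>l. letter_weight (f l) = letter_weight l) \<Longrightarrow> word_weight (map f w) = word_weight w"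
  by (induction w) auto

lemma word_weight_filter_complement:
  "word_weight (filter P w) + word_weight (filter (\<lambda>l. \<not> P l) w) = word_weight w"
  by (induction w) auto

lemma word_weight_crossing [simp]: "word_weight [(c, True, s), (c, False, s)] = 0"
  by (cases s) simp_all

lemma word_weight_eq_sum_labels:
  "word_weight w = (\<Sum>c\<in>labels w. word_weight (filter (\<lambda>l. fst l = c) w))"
proof (induction w)
  case (Cons l w)
  have "(\<Sum>c\<in>labels (l # w). word_weight (filter (\<lambda>l. fst l = c) (l # w)))
      = (\<Sum>c\<in>labels (l # w). (if fst l = c then letter_weight l else 0))
        + (\<Sum>c\<in>labels (l # w). word_weight (filter (\<lambda>l. fst l = c) w))"
    unfolding sum.distrib[symmetric] by (intro sum.cong) auto
  also have "(\<Sum>c\<in>labels (l # w). word_weight (filter (\<lambda>l. fst l = c) w)) = word_weight w"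
    unfolding Cons labels_def
    by (auto simp: sum.insert_if image_iff intro: sum.cong)
       (metis (mono_tags) filter_False word_weight_simps(1))
  finally show ?case
    by simp
qed simp

lemma mset_subset_eq_size_antisym: "A \<subseteq># B \<Longrightarrow> size B \<le> size A \<Longrightarrow> A = B"
  using mset_subset_size[of A B] by (auto simp: subset_mset.le_less)

lemma wf_gauss_length_occurrences:
  "wf_gauss w \<Longrightarrow> c \<in> labels w \<Longrightarrow> length (filter (\<lambda>l. fst l = c) w) = 2"
  unfolding wf_gauss_def by blast

lemma wf_gauss_occurrences:
  assumes "wf_gauss w" "c \<in> labels w"
  obtains s where "mset (filter (\<lambda>l. fst l = c) w) = {#(c, True, s), (c, False, s)#}"
proof -
  from assms obtain s where over: "count_list w (c, True, s) = 1"
    and under: "count_list w (c, False, s) = 1"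
    and two: "length (filter (\<lambda>l. fst l = c) w) = 2"
    unfolding wf_gauss_def by blast
  let ?M = "mset (filter (\<lambda>l. fst l = c) w)"
  have sub: "{#(c, True, s), (c, False, s)#} \<subseteq># ?M"
    using over under by (intro mset_subset_eqI) (auto simp: count_mset)
  have "size ?M = 2"
    using two by (simp del: mset_filter)
  then have "{#(c, True, s), (c, False, s)#} = ?M"
    by (intro mset_subset_eq_size_antisym[OF sub]) simp
  then show thesis
    by (rule that[OF sym])
qed

lemma word_weight_wf_gauss_submultiset:
  assumes wf: "wf_gauss w" and sub: "mset u \<subseteq># mset w"
    and no_single: "\<And>c. c \<in> labels u \<Longrightarrow> length (filter (\<lambda>l. fst l = c) u) \<noteq> 1"
  shows "word_weight u = 0"
proof -
  have "word_weight (filter (\<lambda>l. fst l = c) u) = 0" if c: "c \<in> labels u" for c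
  proof -
    have "c \<in> labels w"
      using c set_mset_mono[OF sub] unfolding labels_def by auto
    then obtain s where s: "mset (filter (\<lambda>l. fst l = c) w) = {#(c, True, s), (c, False, s)#}"
      using wf wf_gauss_occurrences by blast
    let ?M = "mset (filter (\<lambda>l. fst l = c) u)"
    have sub_c: "?M \<subseteq># {#(c, True, s), (c, False, s)#}"
      using multiset_filter_mono[OF sub, of "\<lambda>l. fst l = c"] s by simp
    have "filter (\<lambda>l. fst l = c) u \<noteq> []"
      using c by (auto simp: labels_def filter_empty_conv)
    then have "size ?M \<noteq> 0" "size ?M \<noteq> 1"
      using no_single[OF c] by (simp_all del: mset_filter)
    moreover have "size ?M \<le> 2"
      using size_mset_mono[OF sub_c] by simp
    ultimately have "size ?M = 2"
      by linarith
    then have "?M = mset [(c, True, s), (c, False, s)]"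
      using mset_subset_eq_size_antisym[OF sub_c] by simp
    then have "word_weight (filter (\<lambda>l. fst l = c) u) = word_weight [(c, True, s), (c, False, s)]"
      by (rule word_weight_mset)
    then show ?thesis
      by simp
  qed
  then show ?thesis
    by (subst word_weight_eq_sum_labels) simp
qed

lemma word_weight_wf_gauss: "wf_gauss w \<Longrightarrow> word_weight w = 0"
  using word_weight_wf_gauss_submultiset wf_gauss_length_occurrences by fastforce

lemma word_weight_single_labels:
  assumes wf: "wf_gauss w" and sub: "mset u \<subseteq># mset w"
  shows "word_weight (filter (\<lambda>l. length (filter (\<lambda>m. fst m = fst l) u) = 1) u) = word_weight u"
proof -
  let ?single = "\<lambda>l. length (filter (\<lambda>m. fst m = fst l) u) = 1"
  let ?rest = "filter (\<lambda>l. \<not> ?single l) u"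
  have "mset ?rest \<subseteq># mset u"
    by (simp add: multiset_filter_subset)
  then have "mset ?rest \<subseteq># mset w"
    using sub by (rule subset_mset.order_trans)
  moreover have "filter (\<lambda>l. fst l = c) ?rest = filter (\<lambda>l. fst l = c) u"
    if "c \<in> labels ?rest" for c
    using that unfolding labels_def filter_filter by (auto intro: filter_cong)
  ultimately have "word_weight ?rest = 0"
    by (intro word_weight_wf_gauss_submultiset[OF wf]) (auto simp: labels_def)
  then show ?thesis
    using word_weight_filter_complement[of ?single u] by simp
qed

lemma mset_arc_subset: "mset (arc w d) \<subseteq># mset w"
proof -
  have "mset (takeWhile P u) \<subseteq># mset u" for P and u :: gword
    by (metis mset_append mset_subset_eq_add_left takeWhile_dropWhile_id)
  moreover have "mset (dropWhile P u) \<subseteq># mset u" for P and u :: gword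
    by (metis mset_append mset_subset_eq_add_right takeWhile_dropWhile_id)
  moreover have "mset (tl u) \<subseteq># mset u" for u :: gword
    by (cases u) auto
  ultimately show ?thesis
    unfolding arc_def by (meson subset_mset.order_trans)
qed

lemma crossing_index_eq_word_weight_arc:
  "wf_gauss w \<Longrightarrow> crossing_index w d = word_weight (arc w d)"
  using word_weight_single_labels[OF _ mset_arc_subset]
  unfolding crossing_index_def Let_def word_weight_def letter_weight_def by simp

definition arc_poly_mod2 :: "gword \<Rightarrow> bit poly" where
  "arc_poly_mod2 w = (\<Sum>d\<in>labels w. monom 1 (nat \<bar>word_weight (arc w d)\<bar>) + 1)"

lemma bit_poly_add_self [simp]: "(p :: bit poly) + p = 0"
  unfolding poly_eq_iff coeff_add by simp

lemma map_poly_add: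
  assumes "f 0 = 0" "\<And>x y. f (x + y) = f x + f y"
  shows "map_poly f (p + q) = map_poly f p + map_poly f q"
  using assms by (intro poly_eqI) (simp add: coeff_map_poly)

lemma map_poly_sum_list:
  assumes "f 0 = 0" "\<And>x y. f (x + y) = f x + f y"
  shows "map_poly f (sum_list ps) = sum_list (map (map_poly f) ps)"
  by (induction ps) (simp_all add: assms map_poly_add)

lemma map_poly_of_int_crossing_term [simp]:
  "map_poly (of_int :: int \<Rightarrow> bit) (smult (sgnval s) (monom 1 n - 1)) = monom 1 n + 1"
  by (intro poly_eqI) (auto simp: coeff_map_poly coeff_monom sgnval_def coeff_1)

lemma count_over_passages:
  assumes "wf_gauss w"
  shows "count (mset (map fst (filter (\<lambda>l. fst (snd l)) w))) c = (if c \<in> labels w then 1 else 0)"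
proof -
  have count: "count (mset (map fst (filter (\<lambda>l. fst (snd l)) w))) c
      = size (filter_mset (\<lambda>l. fst (snd l)) (mset (filter (\<lambda>l. fst l = c) w)))"
    by (induction w) auto
  show ?thesis
  proof (cases "c \<in> labels w")
    case True
    then obtain s where "mset (filter (\<lambda>l. fst l = c) w) = {#(c, True, s), (c, False, s)#}"
      using assms wf_gauss_occurrences by blast
    with True show ?thesis
      unfolding count by simp
  next
    case False
    then have "filter (\<lambda>l. fst l = c) w = []"
      by (force simp: labels_def filter_empty_conv)
    with False show ?thesis
      unfolding count by simp
  qed
qed

lemma p_t_mod2_eq_arc_poly_mod2:
  assumes wf: "wf_gauss w"
  shows "p_t_mod2 w = arc_poly_mod2 w"
proof -
  let ?overs = "map fst (filter (\<lambda>l. fst (snd l)) w)"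
  let ?term = "\<lambda>d. monom 1 (nat \<bar>word_weight (arc w d)\<bar>) + (1 :: bit poly)"
  have set_overs: "set ?overs = labels w"
  proof (rule set_eqI)
    fix c
    show "c \<in> set ?overs \<longleftrightarrow> c \<in> labels w"
      using count_over_passages[OF wf, of c] count_mset_0_iff[of ?overs c] by (metis zero_neq_one)
  qed
  have "distinct ?overs"
    unfolding distinct_count_atmost_1 set_overs using count_over_passages[OF wf] by blast
  have "p_t_mod2 w = sum_list (map ?term ?overs)"
    unfolding p_t_mod2_def p_t_def map_poly_sum_list[of of_int, OF of_int_0 of_int_add] map_map
    by (intro arg_cong[where f = sum_list] map_cong)
       (auto simp: crossing_index_eq_word_weight_arc[OF wf])
  also have "\<dots> = sum ?term (labels w)"
    using sum_list_distinct_conv_sum_set[OF \<open>distinct ?overs\<close>] set_overs by (simp only:)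
  finally show ?thesis
    unfolding arc_poly_mod2_def .
qed

lemma arc_poly_mod2_cong:
  assumes "labels w = labels w'"
    and "\<And>d. d \<in> labels w \<Longrightarrow> \<bar>word_weight (arc w d)\<bar> = \<bar>word_weight (arc w' d)\<bar>"
  shows "arc_poly_mod2 w = arc_poly_mod2 w'"
  unfolding arc_poly_mod2_def using assms by (intro sum.cong) auto

lemma arc_append_absent: "d \<notin> labels u \<Longrightarrow> arc (u @ w) d = arc w d"
  unfolding arc_def labels_def by (subst dropWhile_append2) auto

lemma arc_Cons_label: "fst l = d \<Longrightarrow> arc (l # w) d = takeWhile (\<lambda>m. fst m \<noteq> d) w"
  unfolding arc_def by simp

lemma arc_Cons_other: "fst l \<noteq> d \<Longrightarrow> arc (l # w) d = arc w d"
  unfolding arc_def by simp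

lemma takeWhile_label_append_absent:
  "d \<notin> labels u \<Longrightarrow> takeWhile (\<lambda>l. fst l \<noteq> d) (u @ w) = u @ takeWhile (\<lambda>l. fst l \<noteq> d) w"
  unfolding labels_def by (subst takeWhile_append2) auto

lemma takeWhile_label_append_present:
  "d \<in> labels u \<Longrightarrow> takeWhile (\<lambda>l. fst l \<noteq> d) (u @ w) = takeWhile (\<lambda>l. fst l \<noteq> d) u"
  unfolding labels_def by (auto intro: takeWhile_append1)

lemma word_weight_arc_replace:
  assumes "d \<notin> labels u" "d \<notin> labels u'" "word_weight u = word_weight u'"
  shows "word_weight (arc (x @ u @ y) d) = word_weight (arc (x @ u' @ y) d)"
proof (cases "d \<in> labels x")
  case False
  then show ?thesis
    using assms by (simp add: arc_append_absent)
next
  case True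
  let ?P = "\<lambda>l. fst l \<noteq> d"
  define t where "t = tl (dropWhile ?P x)"
  have "dropWhile ?P x \<noteq> []"
    using True by (auto simp: labels_def dropWhile_eq_Nil_conv)
  moreover have "dropWhile ?P (x @ r) = dropWhile ?P x @ r" for r
    using True by (auto simp: labels_def intro: dropWhile_append1)
  ultimately have arc_eq: "arc (x @ r) d = takeWhile ?P (t @ r)" for r
    unfolding arc_def t_def by (simp add: tl_append2)
  show ?thesis
    unfolding arc_eq using assms
    by (cases "d \<in> labels t") (simp_all add: takeWhile_label_append_present takeWhile_label_append_absent)
qed

lemma arc_map:
  assumes "\<And>l. l \<in> set w \<Longrightarrow> fst (f l) = e \<longleftrightarrow> fst l = d"
  shows "arc (map f w) e = map f (arc w d)"
proof -
  have drop: "dropWhile (\<lambda>l. fst l \<noteq> e) (map f w) = map f (dropWhile (\<lambda>l. fst l \<noteq> d) w)"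
    unfolding dropWhile_map using assms by (intro arg_cong[where f = "map f"] dropWhile_cong) auto
  have "set (tl (dropWhile (\<lambda>l. fst l \<noteq> d) w)) \<subseteq> set w"
    by (metis list.set_sel(2) set_dropWhileD subsetI tl_Nil)
  then show ?thesis
    unfolding arc_def drop map_tl[symmetric] takeWhile_map
    using assms by (intro arg_cong[where f = "map f"] takeWhile_cong) auto
qed

lemma arc_append_right:
  assumes "2 \<le> length (filter (\<lambda>l. fst l = d) w)"
  shows "arc (w @ y) d = arc w d"
proof -
  obtain u l v where w: "w = u @ l # v" and l: "fst l = d" and u: "d \<notin> labels u"
    using assms split_list_first_prop[of w "\<lambda>l. fst l = d"]
    by (force simp: labels_def filter_empty_conv)
  have "filter (\<lambda>m. fst m = d) u = []"
    using u by (force simp: labels_def filter_empty_conv)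
  then have "filter (\<lambda>m. fst m = d) v \<noteq> []"
    using assms l unfolding w by auto
  then have "d \<in> labels v"
    by (auto simp: labels_def filter_empty_conv)
  then show ?thesis
    unfolding w using u l by (simp add: arc_append_absent arc_Cons_label takeWhile_label_append_present)
qed

lemma arc_poly_mod2_crossing_change:
  assumes "cc_move w w'"
  shows "arc_poly_mod2 w = arc_poly_mod2 w'"
proof -
  define f :: "nat \<Rightarrow> letter \<Rightarrow> letter"
    where "f c = (\<lambda>(d, ov, s). if d = c then (d, \<not> ov, \<not> s) else (d, ov, s))" for c
  obtain c where w': "w' = map (f c) w"
    using assms unfolding cc_move_def f_def by blast
  have fst_f: "fst (f c l) = fst l" for l
    unfolding f_def by (cases l) auto
  have weight_f: "letter_weight (f c l) = letter_weight l" for l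
    unfolding f_def by (cases l) (auto simp: sgnval_def)
  have "labels w' = labels w"
    unfolding w' labels_def by (simp add: image_image fst_f)
  moreover have "arc w' d = map (f c) (arc w d)" for d
    unfolding w' using fst_f by (intro arc_map) auto
  ultimately show ?thesis
    by (intro arc_poly_mod2_cong) (auto simp: word_weight_map weight_f)
qed

lemma arc_poly_mod2_rename:
  assumes "rename_move w w'"
  shows "arc_poly_mod2 w = arc_poly_mod2 w'"
proof -
  obtain f where inj: "inj_on f (labels w)" and w': "w' = map (\<lambda>(c, ov, s). (f c, ov, s)) w"
    using assms unfolding rename_move_def by blast
  define F :: "letter \<Rightarrow> letter" where "F = (\<lambda>(c, ov, s). (f c, ov, s))"
  have fst_F: "fst (F l) = f (fst l)" for l
    unfolding F_def by (cases l) auto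
  have weight_F: "letter_weight (F l) = letter_weight l" for l
    unfolding F_def by (cases l) auto
  have labels: "labels w' = f ` labels w"
    unfolding w' F_def[symmetric] labels_def by (simp add: image_image fst_F)
  have "word_weight (arc w' (f d)) = word_weight (arc w d)" if d: "d \<in> labels w" for d
  proof -
    have "fst (F l) = f d \<longleftrightarrow> fst l = d" if "l \<in> set w" for l
      using inj d that unfolding fst_F by (auto simp: labels_def inj_on_def)
    then show ?thesis
      unfolding w' F_def[symmetric] by (subst arc_map[where d = d]) (auto simp: word_weight_map weight_F)
  qed
  then show ?thesis
    unfolding arc_poly_mod2_def labels sum.reindex[OF inj] by (intro sum.cong) auto
qed

lemma arc_poly_mod2_R1:
  assumes "R1_move w w'"
  shows "arc_poly_mod2 w = arc_poly_mod2 w'"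
proof -
  obtain u v c ov s where w: "w = u @ v" and c: "c \<notin> labels w"
    and w': "w' = u @ [(c, ov, s), (c, \<not> ov, s)] @ v"
    using assms unfolding R1_move_def by blast
  have "arc w' c = []"
    unfolding w' using c w by (simp add: arc_append_absent arc_Cons_label)
  moreover have "word_weight (arc w' d) = word_weight (arc w d)" if "d \<in> labels w" for d
  proof -
    have "word_weight (arc (u @ [(c, ov, s), (c, \<not> ov, s)] @ v) d) = word_weight (arc (u @ [] @ v) d)"
      using c that by (intro word_weight_arc_replace) (auto simp: sgnval_def)
    then show ?thesis
      unfolding w' w by simp
  qed
  moreover have "labels w' = insert c (labels w)"
    using w w' by auto
  moreover have "monom 1 0 + 1 = (0 :: bit poly)"
    by (simp add: monom_0 one_pCons)
  ultimately show ?thesis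
    using c unfolding arc_poly_mod2_def by simp
qed

lemma arc_poly_mod2_R2:
  assumes "R2_move w w'"
  shows "arc_poly_mod2 w = arc_poly_mod2 w'"
proof -
  obtain u v x c d s where w: "w = u @ v @ x" and cd: "c \<noteq> d"
    and c: "c \<notin> labels w" and d: "d \<notin> labels w"
    and w': "w' = u @ [(c, True, s), (d, True, \<not> s)] @ v @ [(c, False, s), (d, False, \<not> s)] @ x \<or>
             w' = u @ [(c, True, s), (d, True, \<not> s)] @ v @ [(d, False, \<not> s), (c, False, s)] @ x"
    using assms unfolding R2_move_def by blast
  define over :: gword where "over = [(c, True, s), (d, True, \<not> s)]"
  obtain under :: gword where
    under: "under = [(c, False, s), (d, False, \<not> s)] \<or> under = [(d, False, \<not> s), (c, False, s)]"
    and w'_split: "w' = u @ over @ v @ under @ x"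
    using w' unfolding over_def by blast
  have weights: "word_weight over = 0" "word_weight under = 0"
    using under unfolding over_def by (cases s; auto)+
  have labels: "labels over = {c, d}" "labels under = {c, d}"
    using under unfolding over_def by auto
  have "word_weight (arc w' e) = word_weight (arc w e)" if e: "e \<in> labels w" for e
  proof -
    have "e \<noteq> c" "e \<noteq> d"
      using c d e by auto
    then have "word_weight (arc (u @ over @ (v @ under @ x)) e) = word_weight (arc (u @ [] @ (v @ under @ x)) e)"
      and "word_weight (arc ((u @ v) @ under @ x) e) = word_weight (arc ((u @ v) @ [] @ x) e)"
      using labels weights by (intro word_weight_arc_replace; simp)+
    then show ?thesis
      unfolding w'_split w by simp
  qed
  moreover have "word_weight (arc w' c) = word_weight (arc w' d)"
    using under c d cd unfolding w'_split over_def w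
    by (cases s; auto simp: arc_append_absent arc_Cons_label arc_Cons_other takeWhile_label_append_absent)
  moreover have "labels w' = insert c (insert d (labels w))"
    using under unfolding w'_split w over_def by auto
  ultimately show ?thesis
    using c d cd unfolding arc_poly_mod2_def by (simp add: add.assoc[symmetric])
qed

lemma arc_poly_mod2_rotate:
  assumes wf: "wf_gauss w" and "rot_move w w'"
  shows "arc_poly_mod2 w = arc_poly_mod2 w'"
proof (cases w)
  case Nil
  then show ?thesis
    using assms by (simp add: rot_move_def)
next
  case (Cons l r)
  have w': "w' = r @ [l]"
    using assms Cons by (simp add: rot_move_def)
  have "\<bar>word_weight (arc w' d)\<bar> = \<bar>word_weight (arc w d)\<bar>" if d: "d \<in> labels w" for d
  proof (cases "fst l = d")
    case False
    then have "length (filter (\<lambda>l. fst l = d) r) = 2"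
      using wf_gauss_length_occurrences[OF wf d] Cons by simp
    then show ?thesis
      unfolding w' Cons using False by (simp add: arc_append_right arc_Cons_other)
  next
    case True
    have "length (filter (\<lambda>l. fst l = d) r) = 1"
      using wf_gauss_length_occurrences[OF wf d] Cons True by simp
    then obtain a where "filter (\<lambda>m. fst m = d) r = [a]"
      by (auto simp: length_Suc_conv)
    then obtain p q where r: "r = p @ a # q" and a: "fst a = d"
      and p_filter: "filter (\<lambda>m. fst m = d) p = []" and q_filter: "filter (\<lambda>m. fst m = d) q = []"
      by (auto simp: filter_eq_Cons_iff filter_empty_conv eq_commute[of "[]"])
    then have p: "d \<notin> labels p" and q: "d \<notin> labels q"
      by (force simp: labels_def filter_empty_conv)+
    have "arc w d = p" "arc w' d = q"
      unfolding w' Cons r using True a p q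
      by (simp_all add: arc_append_absent arc_Cons_label takeWhile_label_append_absent)
    moreover have "word_weight [l, a] = 0"
    proof -
      have "filter (\<lambda>m. fst m = d) w = [l, a]"
        unfolding Cons r using True a p_filter q_filter by simp
      moreover obtain s where "mset (filter (\<lambda>m. fst m = d) w) = mset [(d, True, s), (d, False, s)]"
        using wf_gauss_occurrences[OF wf d] by auto
      ultimately show ?thesis
        using word_weight_mset by fastforce
    qed
    moreover have "word_weight w = 0"
      using wf by (rule word_weight_wf_gauss)
    ultimately show ?thesis
      unfolding Cons r by simp
  qed
  moreover have "labels w' = labels w"
    unfolding w' Cons by auto
  ultimately show ?thesis
    by (intro arc_poly_mod2_cong) auto
qed

lemma mset_eq_permutations3:
  "mset [X, Y, Z] = mset [A, B, C] \<Longrightarrow>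
    (X, Y, Z) \<in> {(A, B, C), (A, C, B), (B, A, C), (B, C, A), (C, A, B), (C, B, A)}"
  by (auto simp: add_eq_conv_ex)

lemma r3_pairs_labels:
  assumes "r3_pairs om tT tM tB a b c = (PT, PM, PB)"
  shows "labels PT \<subseteq> {a, b, c}" "labels PM \<subseteq> {a, b, c}" "labels PB \<subseteq> {a, b, c}"
  using assms by (cases om; cases tT; cases tM; cases tB; auto simp: r3_pairs_def Let_def)+

lemma r3_pairs_length_occurrences:
  assumes "r3_pairs om tT tM tB a b c = (PT, PM, PB)" "a \<noteq> b" "a \<noteq> c" "b \<noteq> c" "e \<in> {a, b, c}"
  shows "length (filter (\<lambda>l. fst l = e) (PT @ PM @ PB)) = 2"
  using assms by (cases om; cases tT; cases tM; cases tB; auto simp: r3_pairs_def Let_def)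

lemma word_weight_arc_R3_vertex:
  assumes "a \<noteq> b" "a \<noteq> c" "b \<noteq> c"
    and r3: "r3_pairs om tT tM tB a b c = (PT, PM, PB)"
    and order: "(X, Y, Z) \<in> {(PT, PM, PB), (PT, PB, PM), (PM, PT, PB), (PM, PB, PT), (PB, PT, PM), (PB, PM, PT)}"
    and outside: "\<And>e. e \<in> {a, b, c} \<Longrightarrow> e \<notin> labels u \<and> e \<notin> labels v \<and> e \<notin> labels y \<and> e \<notin> labels z"
    and d: "d \<in> {a, b, c}"
  shows "word_weight (arc (u @ X @ v @ Y @ y @ Z @ z) d)
       = word_weight (arc (u @ rev X @ v @ rev Y @ y @ rev Z @ z) d)"
  using order d r3 assms(1-3) outside[of a, simplified] outside[of b, simplified] outside[of c, simplified]
  by (cases om; cases tT; cases tM; cases tB;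
      auto simp: r3_pairs_def Let_def arc_append_absent arc_Cons_label arc_Cons_other
        takeWhile_label_append_absent)

lemma arc_poly_mod2_R3:
  assumes wf: "wf_gauss w" and "R3_move w w'"
  shows "arc_poly_mod2 w = arc_poly_mod2 w'"
proof -
  obtain u v y z X Y Z om tT tM tB a b c PT PM PB where
    crossings_distinct: "a \<noteq> b" "a \<noteq> c" "b \<noteq> c" and r3: "r3_pairs om tT tM tB a b c = (PT, PM, PB)"
    and strands: "mset [X, Y, Z] = mset [PT, PM, PB]"
    and w: "w = u @ X @ v @ Y @ y @ Z @ z"
    and w': "w' = u @ rev X @ v @ rev Y @ y @ rev Z @ z"
    using assms(2) unfolding R3_move_def by blast
  note order = mset_eq_permutations3[OF strands]
  have labels_strands: "labels X \<subseteq> {a, b, c}" "labels Y \<subseteq> {a, b, c}" "labels Z \<subseteq> {a, b, c}"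
    using order r3_pairs_labels[OF r3] by auto
  have outside: "e \<notin> labels u \<and> e \<notin> labels v \<and> e \<notin> labels y \<and> e \<notin> labels z"
    if e: "e \<in> {a, b, c}" for e
  proof -
    have strands_twice: "length (filter (\<lambda>l. fst l = e) (X @ Y @ Z)) = 2"
      using order r3_pairs_length_occurrences[OF r3 crossings_distinct e] by auto
    then have "filter (\<lambda>l. fst l = e) (X @ Y @ Z) \<noteq> []"
      by auto
    then have "e \<in> labels (X @ Y @ Z)"
      unfolding labels_def filter_empty_conv by force
    then have "e \<in> labels w"
      unfolding w by auto
    then have "length (filter (\<lambda>l. fst l = e) w) = 2"
      by (rule wf_gauss_length_occurrences[OF wf])
    then have "length (filter (\<lambda>l. fst l = e) (u @ v @ y @ z)) = 0"
      using strands_twice unfolding w filter_append length_append by linarith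
    then show ?thesis
      by (force simp: labels_def filter_empty_conv)
  qed
  have "word_weight (arc w d) = word_weight (arc w' d)" for d
  proof (cases "d \<in> {a, b, c}")
    case True
    show ?thesis
      unfolding w w' by (rule word_weight_arc_R3_vertex[OF crossings_distinct r3 order outside True])
  next
    case False
    then have "d \<notin> labels X" "d \<notin> labels Y" "d \<notin> labels Z"
      using labels_strands by auto
    then have "word_weight (arc (u @ X @ (v @ Y @ y @ Z @ z)) d)
          = word_weight (arc (u @ rev X @ (v @ Y @ y @ Z @ z)) d)"
      and "word_weight (arc ((u @ rev X @ v) @ Y @ (y @ Z @ z)) d)
          = word_weight (arc ((u @ rev X @ v) @ rev Y @ (y @ Z @ z)) d)"
      and "word_weight (arc ((u @ rev X @ v @ rev Y @ y) @ Z @ z) d)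
          = word_weight (arc ((u @ rev X @ v @ rev Y @ y) @ rev Z @ z) d)"
      by (intro word_weight_arc_replace; simp)+
    then show ?thesis
      unfolding w w' by simp
  qed
  moreover have "labels w' = labels w"
    unfolding w w' by auto
  ultimately show ?thesis
    by (intro arc_poly_mod2_cong) auto
qed

lemma p_t_mod2_homotopy_step:
  assumes "homotopy_step w w'"
  shows "p_t_mod2 w = p_t_mod2 w'"
proof -
  have wf: "wf_gauss w" "wf_gauss w'"
    using assms unfolding homotopy_step_def by auto
  have "arc_poly_mod2 w = arc_poly_mod2 w'"
    using assms arc_poly_mod2_rotate[OF wf(1)] arc_poly_mod2_rename arc_poly_mod2_R1
      arc_poly_mod2_R2 arc_poly_mod2_R3[OF wf(1)] arc_poly_mod2_crossing_change
    unfolding homotopy_step_def by blast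
  then show ?thesis
    by (simp add: p_t_mod2_eq_arc_poly_mod2 wf)
qed

theorem mainTheorem3:
  fixes K1 K2 :: gword
  assumes "homotopic K1 K2"
  shows "p_t_mod2 K1 = p_t_mod2 K2"
  using assms unfolding homotopic_def
  by (induction rule: equivclp_induct) (auto dest: p_t_mod2_homotopy_step)

end
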